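(* For integers $\ell\ge 3$ and $r\ge 1$, let $\mathcal{C}_\ell$ be the class of all cycles of length at least $\ell$. Then $R_{r\text{-loc}}(\mathcal{C}_\ell)\le 2\ell r$.
   Context: An edge colouring of a graph is an $r$-local colouring if the edges incident to any vertex are coloured with at most $r$ colours (the total number of colours is not restricted). For a class of graphs $\mathcal{H}$, the $r$-local Ramsey number $R_{r\text{-loc}}(\mathcal{H})$ is the smallest $n$ such that every $r$-local colouring of the edges of $K_n$ contains a monochromatic copy of some graph $H\in\mathcal{H}$. *)

theory Defs
  imports Main
begin

text \<open>Edge colourings of the complete graph K_n on vertex set {0..<n}:
  a symmetric function c, where c u v is the colour of edge uv (u \<noteq> v).\<close>

definition edge_colouring :: "nat \<Rightarrow> (nat \<Rightarrow> nat \<Rightarrow> nat) \<Rightarrow> bool" where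
  "edge_colouring n c \<longleftrightarrow> (\<forall>u<n. \<forall>v<n. u \<noteq> v \<longrightarrow> c u v = c v u)"

definition r_local :: "nat \<Rightarrow> nat \<Rightarrow> (nat \<Rightarrow> nat \<Rightarrow> nat) \<Rightarrow> bool" where
  "r_local r n c \<longleftrightarrow> (\<forall>v<n. card (c v ` ({..<n} - {v})) \<le> r)"

definition mono_long_cycle :: "nat \<Rightarrow> nat \<Rightarrow> (nat \<Rightarrow> nat \<Rightarrow> nat) \<Rightarrow> bool" where
  "mono_long_cycle l n c \<longleftrightarrow> (\<exists>vs col. distinct vs \<and> length vs \<ge> l \<and> length vs \<ge> 3 \<and>
      set vs \<subseteq> {..<n} \<and>
      (\<forall>i<length vs. c (vs ! i) (vs ! ((i + 1) mod length vs)) = col))"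

definition rloc_ramsey_cycles :: "nat \<Rightarrow> nat \<Rightarrow> nat" where
  "rloc_ramsey_cycles r l = (LEAST n. \<forall>c. edge_colouring n c \<longrightarrow> r_local r n c \<longrightarrow> mono_long_cycle l n c)"

end

theory Submission
  imports Defs
begin

text \<open>A colour class with no cycle of length at least l is sparse: each of its subgraphs has a
  vertex of degree at most l-2, since in a subgraph of minimum degree l-1 a longest path closes
  into a cycle of length at least l. Deleting such vertices one at a time shows that the class has
  at most (l-2)|V| edges, V being its set of non-isolated vertices. In an r-local colouring every
  vertex is non-isolated in at most r colour classes, so summing over the colours gives
  n(n-1)/2 \<le> (l-2)rn, i.e. n \<le> 2(l-2)r + 1 < 2lr.\<close>

definition is_path :: "('a \<Rightarrow> 'a \<Rightarrow> bool) \<Rightarrow> 'a list \<Rightarrow> bool" where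
  "is_path E ps \<longleftrightarrow> distinct ps \<and> (\<forall>i. Suc i < length ps \<longrightarrow> E (ps!i) (ps!Suc i))"

definition is_cycle :: "('a \<Rightarrow> 'a \<Rightarrow> bool) \<Rightarrow> 'a list \<Rightarrow> bool" where
  "is_cycle E vs \<longleftrightarrow> distinct vs \<and> (\<forall>i<length vs. E (vs!i) (vs!((i+1) mod length vs)))"

definition arcs :: "('a \<Rightarrow> 'a \<Rightarrow> bool) \<Rightarrow> 'a set \<Rightarrow> ('a \<times> 'a) set" where
  "arcs E T = {(u,v). u \<in> T \<and> v \<in> T \<and> E u v}"

lemma finite_arcs: "finite T \<Longrightarrow> finite (arcs E T)"
  unfolding arcs_def by (rule finite_subset[of _ "T \<times> T"]) auto

lemma is_path_Cons:
  assumes "is_path E ps" "ps \<noteq> []" "w \<notin> set ps" "E w (ps!0)"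
  shows "is_path E (w # ps)"
  unfolding is_path_def
proof (intro conjI allI impI)
  show "distinct (w # ps)" using assms(1,3) by (simp add: is_path_def)
  fix i assume i: "Suc i < length (w # ps)"
  show "E ((w # ps)!i) ((w # ps)!Suc i)"
    using assms(1,4) i by (cases i) (auto simp: is_path_def)
qed

lemma obtain_path_closed_at_head:
  fixes E :: "'a \<Rightarrow> 'a \<Rightarrow> bool"
  assumes "finite S" "S \<noteq> {}" and sym: "\<And>u v. E u v \<Longrightarrow> E v u"
  obtains ps where "is_path E ps" "ps \<noteq> []" "set ps \<subseteq> S"
    "\<And>w. w \<in> S \<Longrightarrow> E (ps!0) w \<Longrightarrow> w \<in> set ps"
proof -
  define P where "P ps \<longleftrightarrow> is_path E ps \<and> ps \<noteq> [] \<and> set ps \<subseteq> S" for ps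
  obtain s where "s \<in> S" using assms(2) by blast
  then have "P [s]" by (simp add: P_def is_path_def)
  moreover have "length ps < card S + 1" if "P ps" for ps
    using that card_mono[OF assms(1), of "set ps"] distinct_card[of ps]
    by (simp add: P_def is_path_def)
  ultimately obtain ps where ps: "P ps" and longest: "\<And>qs. P qs \<Longrightarrow> length qs \<le> length ps"
    using ex_has_greatest_nat[of P "[s]" length "card S + 1"] by metis
  have "w \<in> set ps" if "w \<in> S" "E (ps!0) w" for w
  proof (rule ccontr)
    assume "w \<notin> set ps"
    then have "P (w # ps)"
      using ps that is_path_Cons[of E ps w] sym by (auto simp: P_def)
    then show False using longest by fastforce
  qed
  then show thesis using that ps by (auto simp: P_def)
qed

text \<open>Close the path at the farthest neighbour of its head.\<close>

lemma long_cycle_from_path: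
  fixes E :: "'a \<Rightarrow> 'a \<Rightarrow> bool"
  assumes path: "is_path E ps" and sym: "\<And>u v. E u v \<Longrightarrow> E v u" and irrefl: "\<And>u. \<not> E u u"
    and "1 \<le> k" and deg: "k \<le> card {w \<in> set ps. E (ps!0) w}"
  obtains vs where "is_cycle E vs" "k + 1 \<le> length vs" "set vs \<subseteq> set ps"
proof -
  define J where "J = {i. i < length ps \<and> E (ps!0) (ps!i)}"
  have "finite J" unfolding J_def by simp
  have "{w \<in> set ps. E (ps!0) w} = (\<lambda>i. ps!i) ` J"
    unfolding J_def by (auto simp: in_set_conv_nth)
  then have "k \<le> card J"
    using deg card_image_le[OF \<open>finite J\<close>, of "\<lambda>i. ps!i"] by simp
  then have "J \<noteq> {}" using \<open>1 \<le> k\<close> by auto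
  define j where "j = Max J"
  have "j \<in> J" using \<open>J \<noteq> {}\<close> \<open>finite J\<close> by (simp add: j_def)
  have "J \<subseteq> {1..j}"
    using irrefl \<open>finite J\<close> by (auto simp: J_def j_def Suc_le_eq intro!: Nat.gr0I)
  then have "k \<le> j" using \<open>k \<le> card J\<close> card_mono[of "{1..j}" J] by simp
  have "j < length ps" "E (ps!0) (ps!j)" using \<open>j \<in> J\<close> by (auto simp: J_def)
  define vs where "vs = take (Suc j) ps"
  have len: "length vs = Suc j" using \<open>j < length ps\<close> by (simp add: vs_def)
  have "is_cycle E vs"
    unfolding is_cycle_def
  proof (intro conjI allI impI)
    show "distinct vs" using path by (simp add: vs_def is_path_def)
    fix i assume "i < length vs"
    then consider "i < j" | "i = j" using len by linarith
    then show "E (vs!i) (vs!((i+1) mod length vs))"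
    proof cases
      case 1
      then show ?thesis using path \<open>j < length ps\<close> len by (simp add: vs_def is_path_def)
    next
      case 2
      then show ?thesis using sym[OF \<open>E (ps!0) (ps!j)\<close>] len by (simp add: vs_def)
    qed
  qed
  moreover have "set vs \<subseteq> set ps" by (simp add: vs_def set_take_subset)
  ultimately show thesis using that len \<open>k \<le> j\<close> by simp
qed

lemma long_cycle_of_min_degree:
  fixes E :: "'a \<Rightarrow> 'a \<Rightarrow> bool"
  assumes "finite S" "S \<noteq> {}" and sym: "\<And>u v. E u v \<Longrightarrow> E v u" and "\<And>u. \<not> E u u"
    and "1 \<le> k" and deg: "\<And>v. v \<in> S \<Longrightarrow> k \<le> card {w \<in> S. E v w}"
  obtains vs where "is_cycle E vs" "k + 1 \<le> length vs" "set vs \<subseteq> S"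
proof -
  obtain ps where ps: "is_path E ps" "ps \<noteq> []" "set ps \<subseteq> S"
    and closed: "\<And>w. w \<in> S \<Longrightarrow> E (ps!0) w \<Longrightarrow> w \<in> set ps"
    using obtain_path_closed_at_head[of S E, OF assms(1,2) sym] by blast
  have "{w \<in> S. E (ps!0) w} = {w \<in> set ps. E (ps!0) w}" using ps(3) closed by auto
  moreover have "ps!0 \<in> S" using ps(2,3) by auto
  ultimately have "k \<le> card {w \<in> set ps. E (ps!0) w}" using deg by metis
  then obtain vs where "is_cycle E vs" "k + 1 \<le> length vs" "set vs \<subseteq> set ps"
    using long_cycle_from_path[OF ps(1) sym assms(4,5)] by blast
  then show thesis using that ps(3) by blast
qed

lemma card_arcs_le_if_degenerate:
  fixes E :: "'a \<Rightarrow> 'a \<Rightarrow> bool"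
  assumes "finite S" and sym: "\<And>u v. E u v \<Longrightarrow> E v u"
    and low: "\<And>T. T \<subseteq> S \<Longrightarrow> T \<noteq> {} \<Longrightarrow> \<exists>v\<in>T. card {w \<in> T. E v w} \<le> d"
  shows "card (arcs E S) \<le> 2 * d * card S"
proof -
  have "card (arcs E T) \<le> 2 * d * card T" if "T \<subseteq> S" for T
    using that
  proof (induction "card T" arbitrary: T rule: less_induct)
    case less
    show ?case
    proof (cases "T = {}")
      case True
      then show ?thesis by (simp add: arcs_def)
    next
      case False
      have "finite T" using less.prems \<open>finite S\<close> finite_subset by blast
      obtain v where "v \<in> T" and "card {w \<in> T. E v w} \<le> d"
        using low[OF less.prems False] by blast
      define N where "N = {w \<in> T. E v w}"
      have "finite N" using \<open>finite T\<close> by (simp add: N_def)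
      have card_T: "card T = Suc (card (T - {v}))"
        using \<open>v \<in> T\<close> \<open>finite T\<close> by (metis card_Suc_Diff1)
      have IH: "card (arcs E (T - {v})) \<le> 2 * d * card (T - {v})"
        using less.hyps[of "T - {v}"] less.prems card_T by auto
      have "arcs E T \<subseteq> arcs E (T - {v}) \<union> ({v} \<times> N) \<union> (\<lambda>w. (w, v)) ` N"
        using sym by (auto simp: arcs_def N_def)
      then have "card (arcs E T) \<le> card (arcs E (T - {v}) \<union> ({v} \<times> N) \<union> (\<lambda>w. (w, v)) ` N)"
        using \<open>finite T\<close> \<open>finite N\<close> by (intro card_mono) (auto intro: finite_arcs)
      also have "\<dots> \<le> card (arcs E (T - {v})) + card ({v} \<times> N) + card ((\<lambda>w. (w, v)) ` N)"
        by (metis (no_types) add_mono card_Un_le le_refl order_trans)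
      also have "\<dots> \<le> 2 * d * card (T - {v}) + d + d"
        using IH \<open>card {w \<in> T. E v w} \<le> d\<close> card_image_le[OF \<open>finite N\<close>, of "\<lambda>w. (w, v)"]
        by (simp add: N_def card_cartesian_product)
      also have "\<dots> = 2 * d * card T" using card_T by simp
      finally show ?thesis .
    qed
  qed
  then show ?thesis by simp
qed

text \<open>The Erdos-Gallai bound, counted in ordered pairs.\<close>

lemma card_arcs_le_if_no_long_cycle:
  fixes E :: "'a \<Rightarrow> 'a \<Rightarrow> bool"
  assumes "finite S" and sym: "\<And>u v. E u v \<Longrightarrow> E v u" and irrefl: "\<And>u. \<not> E u u"
    and "2 \<le> l" and no_cycle: "\<And>vs. is_cycle E vs \<Longrightarrow> set vs \<subseteq> S \<Longrightarrow> length vs < l"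
  shows "card (arcs E S) \<le> 2 * (l - 2) * card S"
proof (rule card_arcs_le_if_degenerate[OF \<open>finite S\<close> sym])
  fix T assume "T \<subseteq> S" "T \<noteq> {}"
  show "\<exists>v\<in>T. card {w \<in> T. E v w} \<le> l - 2"
  proof (rule ccontr)
    assume "\<not> ?thesis"
    then have deg: "\<And>v. v \<in> T \<Longrightarrow> l - 1 \<le> card {w \<in> T. E v w}" by force
    have "finite T" using \<open>T \<subseteq> S\<close> \<open>finite S\<close> finite_subset by blast
    moreover have "1 \<le> l - 1" using \<open>2 \<le> l\<close> by simp
    ultimately obtain vs where "is_cycle E vs" "l - 1 + 1 \<le> length vs" "set vs \<subseteq> T"
      using long_cycle_of_min_degree[of T E "l - 1"] \<open>T \<noteq> {}\<close> sym irrefl deg by blast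
    then show False using no_cycle[of vs] \<open>T \<subseteq> S\<close> \<open>2 \<le> l\<close> by auto
  qed
qed

definition colour_graph :: "nat \<Rightarrow> (nat \<Rightarrow> nat \<Rightarrow> nat) \<Rightarrow> nat \<Rightarrow> nat \<Rightarrow> nat \<Rightarrow> bool" where
  "colour_graph n c col u v \<longleftrightarrow> u < n \<and> v < n \<and> u \<noteq> v \<and> c u v = col"

definition colour_vertices :: "nat \<Rightarrow> (nat \<Rightarrow> nat \<Rightarrow> nat) \<Rightarrow> nat \<Rightarrow> nat set" where
  "colour_vertices n c col = {v. v < n \<and> col \<in> c v ` ({..<n} - {v})}"

definition colours :: "nat \<Rightarrow> (nat \<Rightarrow> nat \<Rightarrow> nat) \<Rightarrow> nat set" where
  "colours n c = {c u v |u v. u < n \<and> v < n \<and> u \<noteq> v}"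

lemma finite_colours: "finite (colours n c)"
proof -
  have "colours n c = (\<lambda>(u, v). c u v) ` {(u, v). u < n \<and> v < n \<and> u \<noteq> v}"
    by (auto simp: colours_def)
  moreover have "finite {(u, v). u < n \<and> v < n \<and> u \<noteq> (v::nat)}"
    by (rule finite_subset[of _ "{..<n} \<times> {..<n}"]) auto
  ultimately show ?thesis by simp
qed

lemma finite_colour_vertices: "finite (colour_vertices n c col)"
  by (simp add: colour_vertices_def)

lemma sum_card_arcs_colour_graph:
  assumes "edge_colouring n c"
  shows "(\<Sum>col\<in>colours n c. card (arcs (colour_graph n c col) (colour_vertices n c col)))
    = n * (n - 1)"
proof -
  let ?A = "\<lambda>col. arcs (colour_graph n c col) (colour_vertices n c col)"
  have "(\<Union>col\<in>colours n c. ?A col) = (SIGMA u:{..<n}. {..<n} - {u})"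
  proof
    show "(\<Union>col\<in>colours n c. ?A col) \<subseteq> (SIGMA u:{..<n}. {..<n} - {u})"
      by (auto simp: arcs_def colour_graph_def)
    show "(SIGMA u:{..<n}. {..<n} - {u}) \<subseteq> (\<Union>col\<in>colours n c. ?A col)"
    proof
      fix p assume "p \<in> (SIGMA u:{..<n}. {..<n} - {u})"
      then obtain u v where p: "p = (u, v)" "u < n" "v < n" "u \<noteq> v" by auto
      then have "(u, v) \<in> ?A (c u v)" and "c u v \<in> colours n c"
        using assms by (auto 4 3 simp: arcs_def colour_graph_def colour_vertices_def
            colours_def edge_colouring_def)
      then show "p \<in> (\<Union>col\<in>colours n c. ?A col)" using p(1) by blast
    qed
  qed
  moreover have "?A col \<inter> ?A col' = {}" if "col \<noteq> col'" for col col'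
    using that by (auto simp: arcs_def colour_graph_def)
  ultimately show ?thesis
    using card_UN_disjoint[of "colours n c" ?A] finite_colours
    by (simp add: finite_arcs finite_colour_vertices card_SigmaI)
qed

lemma sum_card_colour_vertices_le:
  assumes "r_local r n c" and "finite C"
  shows "(\<Sum>col\<in>C. card (colour_vertices n c col)) \<le> n * r"
proof -
  have "(\<Sum>col\<in>C. card (colour_vertices n c col))
      = (\<Sum>v<n. card {col \<in> C. col \<in> c v ` ({..<n} - {v})})"
    using sum.swap_restrict[OF \<open>finite C\<close> finite_lessThan, of "\<lambda>_ _. 1::nat"]
    by (simp add: colour_vertices_def)
  also have "\<dots> \<le> (\<Sum>v<n. card (c v ` ({..<n} - {v})))"
    by (intro sum_mono card_mono) auto
  also have "\<dots> \<le> (\<Sum>v<n. r)"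
    using assms(1) by (intro sum_mono) (simp add: r_local_def)
  finally show ?thesis by simp
qed

lemma card_arcs_colour_graph_le:
  assumes "3 \<le> l" and colouring: "edge_colouring n c" and no_mono: "\<not> mono_long_cycle l n c"
  shows "card (arcs (colour_graph n c col) (colour_vertices n c col))
    \<le> 2 * (l - 2) * card (colour_vertices n c col)"
proof (rule card_arcs_le_if_no_long_cycle[OF finite_colour_vertices])
  show "colour_graph n c col v u" if "colour_graph n c col u v" for u v
    using that colouring unfolding colour_graph_def edge_colouring_def by metis
  fix vs assume cycle: "is_cycle (colour_graph n c col) vs"
    and "set vs \<subseteq> colour_vertices n c col"
  show "length vs < l"
  proof (rule ccontr)
    assume "\<not> length vs < l"
    with cycle \<open>set vs \<subseteq> colour_vertices n c col\<close> \<open>3 \<le> l\<close> have "mono_long_cycle l n c"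
      unfolding mono_long_cycle_def is_cycle_def colour_graph_def colour_vertices_def
      by (intro exI[of _ vs] exI[of _ col]) auto
    with no_mono show False ..
  qed
qed (use \<open>3 \<le> l\<close> in \<open>auto simp: colour_graph_def\<close>)

lemma order_le_if_no_mono_long_cycle:
  assumes "3 \<le> l" and "edge_colouring n c" and "r_local r n c"
    and "\<not> mono_long_cycle l n c"
  shows "n \<le> 2 * (l - 2) * r + 1"
proof -
  have "n * (n - 1)
      = (\<Sum>col\<in>colours n c. card (arcs (colour_graph n c col) (colour_vertices n c col)))"
    using sum_card_arcs_colour_graph[OF assms(2)] by simp
  also have "\<dots> \<le> (\<Sum>col\<in>colours n c. 2 * (l - 2) * card (colour_vertices n c col))"
    by (intro sum_mono card_arcs_colour_graph_le[OF assms(1,2,4)])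
  also have "\<dots> \<le> 2 * (l - 2) * (n * r)"
    using sum_card_colour_vertices_le[OF assms(3) finite_colours]
    by (simp add: sum_distrib_left[symmetric])
  finally have "n * (n - 1) \<le> n * (2 * (l - 2) * r)" by (simp add: ac_simps)
  then show ?thesis by (cases "n = 0") (simp_all only: mult_le_cancel1, linarith+)
qed

theorem corollary2p5:
  fixes l r :: nat
  assumes "l \<ge> 3" and "r \<ge> 1"
  shows "rloc_ramsey_cycles r l \<le> 2 * l * r"
  unfolding rloc_ramsey_cycles_def
proof (rule Least_le, intro allI impI)
  fix c assume "edge_colouring (2 * l * r) c" "r_local r (2 * l * r) c"
  show "mono_long_cycle l (2 * l * r) c"
  proof (rule ccontr)
    assume "\<not> mono_long_cycle l (2 * l * r) c"
    then have "2 * l * r \<le> 2 * (l - 2) * r + 1"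
      using order_le_if_no_mono_long_cycle assms(1) \<open>edge_colouring _ c\<close> \<open>r_local _ _ c\<close> by blast
    moreover have "2 * l * r = 2 * (l - 2) * r + 4 * r"
      using assms(1) by (simp add: algebra_simps diff_mult_distrib2)
    ultimately show False using assms(2) by linarith
  qed
qed

end
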